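(* Let $\mathcal G=(G,f,h)$ be a network dynamical system of size $N$ with maximum out-degree $\Delta(G)$, satisfying Assumptions 1 and 2. For each $q\in[N]$ let $\phi_q\in\mathbb R^{P\times N}$ ($P<N$) satisfy $\delta_{2(\Delta(G)+1)}(\phi_q)<\sqrt2-1$. For each $q\in[N]$ let $x^q(1)$ be the time-1 state of the trajectory from a $q$-pinching initial condition and $y^q(1)=\phi_q x^q(1)$. Then for every $q\in[N]$ the convex problem $$\min_{\tilde x\in\mathbb R^N}\|\tilde x\|_1\quad\text{subject to}\quad \phi_q\tilde x=y^q(1)$$ has a unique solution $x^q_*(1)$, and $x^q_*(1)=x^q(1)$. Moreover $\operatorname{supp}(x^q(1))\setminus\{q\}=L_1(q)$ for every $q$, so the adjacency matrix is uniquely determined via $A_{ij}=1$ iff $i\neq j$ and $i\in\operatorname{supp}(x^j_*(1))$.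
   Context: Let $G$ be a directed graph on vertex set $[N]=\{1,\dots,N\}$ without self-loops, with adjacency matrix $A\in\{0,1\}^{N\times N}$, where $A_{ij}=1$ if and only if $i$ receives an edge (input) from $j$; in particular $A_{ii}=0$. The out-degree of $q\in[N]$ is $d_q=\#\{i: A_{iq}=1\}$, the maximum out-degree is $\Delta(G)=\max_{q}d_q$, and the first-level set of $q$ is $L_1(q)=\{i\in[N]: A_{iq}=1\}$. The network dynamical system $\mathcal G=(G,f,h)$ is the discrete-time system $x_i(t+1)=f_i(x_i(t))+\sum_{j=1}^N A_{ij}h_{ij}(x_i(t),x_j(t))$ for $i\in[N]$, $t=0,1,2,\dots$, where $f_i:\mathbb R\to\mathbb R$ and $h_{ij}:\mathbb R\times\mathbb R\to\mathbb R$; the state vector is $x(t)=(x_1(t),\dots,x_N(t))^T$. Assumption 1: $f_i(0)=0$ for all $i\in[N]$. Assumption 2: there is $\delta>0$ such that for all $i,j\in[N]$, $h_{ij}(0,0)=0$ and $h_{ij}(0,v)\neq 0$ for every $v$ with $0<|v|<\delta$. For $q\in[N]$, a $q$-pinching initial condition is $x^q(0)$ with $x^q_i(0)=\epsilon_q\delta_{iq}$ (Kronecker delta), where $0<|\epsilon_q|<\delta$; $x^q(t)$ denotes the resulting trajectory. For $x\in\mathbb R^N$, $\operatorname{supp}(x)=\{i: x_i\neq0\}$ and $\|x\|_0=\#\operatorname{supp}(x)$; $x$ is $s$-sparse if $\|x\|_0\le s$. The restricted isometry constant $\delta_s(\phi)$ of $\phi\in\mathbb R^{P\times N}$ is the smallest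 number such that $(1-\delta_s(\phi))\|x\|_2^2\le\|\phi x\|_2^2\le(1+\delta_s(\phi))\|x\|_2^2$ for all $s$-sparse $x\in\mathbb R^N$. *)

theory Defs
  imports "HOL-Analysis.Analysis"
begin

text \<open>Vertex set [N] is the finite type 'n (N = CARD('n)); the adjacency matrix is
  the relation A :: 'n => 'n => bool with A i j meaning A_ij = 1 (i receives from j).\<close>

definition out_degree :: "('n::finite \<Rightarrow> 'n \<Rightarrow> bool) \<Rightarrow> 'n \<Rightarrow> nat" where
  "out_degree A q = card {i. A i q}"

definition max_out_degree :: "('n::finite \<Rightarrow> 'n \<Rightarrow> bool) \<Rightarrow> nat" where
  "max_out_degree A = Max (range (out_degree A))"

definition first_level :: "('n::finite \<Rightarrow> 'n \<Rightarrow> bool) \<Rightarrow> 'n \<Rightarrow> 'n set" where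
  "first_level A q = {i. A i q}"

definition net_step ::
  "('n::finite \<Rightarrow> 'n \<Rightarrow> bool) \<Rightarrow> ('n \<Rightarrow> real \<Rightarrow> real) \<Rightarrow> ('n \<Rightarrow> 'n \<Rightarrow> real \<Rightarrow> real \<Rightarrow> real)
    \<Rightarrow> real^'n \<Rightarrow> real^'n" where
  "net_step A f h x = (\<chi> i. f i (x$i) + (\<Sum>j\<in>{j. A i j}. h i j (x$i) (x$j)))"

definition trajectory ::
  "('n::finite \<Rightarrow> 'n \<Rightarrow> bool) \<Rightarrow> ('n \<Rightarrow> real \<Rightarrow> real) \<Rightarrow> ('n \<Rightarrow> 'n \<Rightarrow> real \<Rightarrow> real \<Rightarrow> real)
    \<Rightarrow> real^'n \<Rightarrow> nat \<Rightarrow> real^'n" where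
  "trajectory A f h x0 t = (net_step A f h ^^ t) x0"

definition pinching :: "real \<Rightarrow> 'n::finite \<Rightarrow> real^'n" where
  "pinching eps q = (\<chi> i. if i = q then eps else 0)"

definition supp :: "real^'n::finite \<Rightarrow> 'n set" where
  "supp x = {i. x$i \<noteq> 0}"

definition l0 :: "real^'n::finite \<Rightarrow> nat" where
  "l0 x = card (supp x)"

definition sparse :: "nat \<Rightarrow> real^'n::finite \<Rightarrow> bool" where
  "sparse s x \<longleftrightarrow> l0 x \<le> s"

definition l1_norm :: "real^'n::finite \<Rightarrow> real" where
  "l1_norm x = (\<Sum>i\<in>UNIV. \<bar>x$i\<bar>)"

definition RIC :: "real^'n::finite^'p::finite \<Rightarrow> nat \<Rightarrow> real" where
  "RIC phi s = Inf {d. \<forall>x. sparse s x \<longrightarrow>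
      (1 - d) * (norm x)\<^sup>2 \<le> (norm (phi *v x))\<^sup>2 \<and> (norm (phi *v x))\<^sup>2 \<le> (1 + d) * (norm x)\<^sup>2}"

definition l1_min_solution :: "real^'n::finite^'p::finite \<Rightarrow> real^'p \<Rightarrow> real^'n \<Rightarrow> bool" where
  "l1_min_solution phi y z \<longleftrightarrow> phi *v z = y \<and> (\<forall>w. phi *v w = y \<longrightarrow> l1_norm z \<le> l1_norm w)"

end

theory Submission
  imports Defs
begin

(* Pinching node q excites only q, so by Assumptions 1 and 2 the state x^q(1) vanishes off
   {q} \<union> L1(q) and is nonzero on L1(q); in particular it is (\<Delta>(G)+1)-sparse and its support
   off q is column q of A.

   Recovery is Candes' theorem: if \<delta>_2s < sqrt 2 - 1, no nonzero kernel vector v of phi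
   satisfies the cone condition |v_{T^c}|_1 \<le> |v_T|_1 with |T| \<le> s (null space property),
   and this makes every s-sparse x the unique l1-minimiser subject to phi z = phi x.  For the
   null space property, cut the complement of T into blocks T1, T2, ... of s largest entries:
   the Euclidean norm of each block is at most the l1-mass of the previous one over sqrt s, so
   the RIP bound on inner products of disjointly supported vectors gives
   |phi (v_T + v_T1)|^2 \<le> \<delta> (a^2 + a b) with a = |v_T|, b = |v_T1|, while the RIP lower
   bound gives (1 - \<delta>) (a^2 + b^2); for \<delta> < sqrt 2 - 1 this forces a = 0. *)

definition vec_restrict :: "'n set \<Rightarrow> real^'n::finite \<Rightarrow> real^'n" where
  "vec_restrict T v = (\<chi> i. if i \<in> T then v$i else 0)"

lemma vec_restrict_nth [simp]: "vec_restrict T v $ i = (if i \<in> T then v$i else 0)"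
  by (simp add: vec_restrict_def)

lemma vec_restrict_empty [simp]: "vec_restrict {} v = 0"
  by (simp add: vec_eq_iff)

lemma vec_restrict_Un:
  "A \<inter> B = {} \<Longrightarrow> vec_restrict (A \<union> B) v = vec_restrict A v + vec_restrict B v"
  by (auto simp: vec_eq_iff)

lemma supp_vec_restrict: "supp (vec_restrict T v) \<subseteq> T"
  by (auto simp: supp_def)

lemma l0_vec_restrict_le: "l0 (vec_restrict T v) \<le> card T"
  unfolding l0_def by (rule card_mono[OF finite supp_vec_restrict])

lemma l0_add_le: "l0 (u + v) \<le> l0 u + l0 v"
proof -
  have "l0 (u + v) \<le> card (supp u \<union> supp v)"
    unfolding l0_def by (rule card_mono) (auto simp: supp_def)
  also have "\<dots> \<le> l0 u + l0 v"
    unfolding l0_def by (rule card_Un_le)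
  finally show ?thesis .
qed

lemma l0_scaleR_le: "l0 (c *\<^sub>R v) \<le> l0 v"
  unfolding l0_def by (rule card_mono) (auto simp: supp_def)

lemma l0_axis: "l0 (axis i (1::real)) = 1"
proof -
  have "supp (axis i (1::real)) = {i}"
    by (auto simp: supp_def axis_def)
  then show ?thesis by (simp add: l0_def)
qed

lemma inner_eq_0_if_supp_disjoint: "supp u \<inter> supp v = {} \<Longrightarrow> inner u v = 0"
  unfolding inner_vec_def supp_def by (intro sum.neutral) auto

lemma l1_norm_split: "l1_norm x = (\<Sum>i\<in>T. \<bar>x$i\<bar>) + (\<Sum>i\<in>-T. \<bar>x$i\<bar>)"
  unfolding l1_norm_def by (subst sum.union_disjoint[symmetric]) auto

lemma l1_norm_eq_0_iff: "l1_norm x = 0 \<longleftrightarrow> x = 0"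
  unfolding l1_norm_def by (simp add: sum_nonneg_eq_0_iff vec_eq_iff)

lemma norm_vec_restrict: "norm (vec_restrict T v) = L2_set (\<lambda>i. v$i) T"
  unfolding norm_vec_def L2_set_def
  by (simp add: sum.If_cases if_distrib[of "\<lambda>x. x\<^sup>2"] if_distrib[of norm])

lemma sum_abs_le_sqrt_card_norm: "(\<Sum>i\<in>T. \<bar>v$i\<bar>) \<le> sqrt (card T) * norm (vec_restrict T v)"
  using L2_set_mult_ineq[of "\<lambda>i. v$i" "\<lambda>_. 1" T]
  by (simp add: norm_vec_restrict L2_set_constant mult.commute)

lemma norm_vec_restrict_le:
  assumes "\<And>i. i \<in> T \<Longrightarrow> \<bar>v$i\<bar> \<le> c" "0 \<le> c"
  shows "norm (vec_restrict T v) \<le> sqrt (card T) * c"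
proof -
  have "L2_set (\<lambda>i. v$i) T = L2_set (\<lambda>i. \<bar>v$i\<bar>) T"
    by (simp add: L2_set_def)
  also have "\<dots> \<le> L2_set (\<lambda>_. c) T"
    using assms(1) by (intro L2_set_mono) auto
  finally show ?thesis
    using assms(2) by (simp add: norm_vec_restrict L2_set_constant)
qed

lemma obtain_top_subset_with_card:
  fixes g :: "'a \<Rightarrow> 'b::linorder"
  assumes "finite R" "k \<le> card R"
  obtains B where "B \<subseteq> R" "card B = k" "\<And>i j. i \<in> B \<Longrightarrow> j \<in> R - B \<Longrightarrow> g j \<le> g i"
  using assms(2)
proof (induction k arbitrary: thesis)
  case 0
  show ?case by (rule "0.prems"(1)[of "{}"]) auto
next
  case (Suc k)
  then obtain B where B: "B \<subseteq> R" "card B = k" "\<And>i j. i \<in> B \<Longrightarrow> j \<in> R - B \<Longrightarrow> g j \<le> g i"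
    by (metis Suc_leD)
  have fin: "finite (R - B)" and ne: "R - B \<noteq> {}"
    using assms(1) Suc.prems(2) B(1,2) by (auto dest: card_mono[OF assms(1)])
  have "Max (g ` (R - B)) \<in> g ` (R - B)"
    using fin ne by (intro Max_in) auto
  then obtain m where m: "m \<in> R - B" "g m = Max (g ` (R - B))"
    by auto
  have m_max: "g j \<le> g m" if "j \<in> R - B" for j
    using fin that by (simp add: m(2))
  have "finite B"
    using B(1) assms(1) finite_subset by blast
  then show ?case
    using B m m_max by (intro Suc.prems(1)[of "insert m B"]) auto
qed

lemma norm_vec_restrict_le_dominating_block:
  assumes "card B = s" "0 < s" "card R \<le> s"
    and "\<And>i j. i \<in> B \<Longrightarrow> j \<in> R \<Longrightarrow> \<bar>v$j\<bar> \<le> \<bar>v$i\<bar>"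
  shows "norm (vec_restrict R v) \<le> (\<Sum>i\<in>B. \<bar>v$i\<bar>) / sqrt s"
proof -
  have "\<bar>v$j\<bar> \<le> (\<Sum>i\<in>B. \<bar>v$i\<bar>) / s" if "j \<in> R" for j
  proof -
    have "real s * \<bar>v$j\<bar> \<le> (\<Sum>i\<in>B. \<bar>v$i\<bar>)"
      using sum_bounded_below[of B "\<bar>v$j\<bar>" "\<lambda>i. \<bar>v$i\<bar>"] assms(1,4) that by auto
    then show ?thesis
      using assms(2) by (simp add: field_simps)
  qed
  then have "norm (vec_restrict R v) \<le> sqrt (card R) * ((\<Sum>i\<in>B. \<bar>v$i\<bar>) / s)"
    by (intro norm_vec_restrict_le) (auto simp: sum_nonneg)
  also have "\<dots> \<le> sqrt s * ((\<Sum>i\<in>B. \<bar>v$i\<bar>) / s)"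
    using assms(3) by (intro mult_right_mono) (auto simp: sum_nonneg)
  also have "\<dots> = (\<Sum>i\<in>B. \<bar>v$i\<bar>) / sqrt s"
    by (metis real_div_sqrt of_nat_0_le_iff times_divide_eq_right divide_divide_eq_right mult.commute)
  finally show ?thesis .
qed

definition restricted_isometry :: "real^'n::finite^'p::finite \<Rightarrow> nat \<Rightarrow> real \<Rightarrow> bool" where
  "restricted_isometry phi s d \<longleftrightarrow> (\<forall>x. sparse s x \<longrightarrow>
      (1 - d) * (norm x)\<^sup>2 \<le> (norm (phi *v x))\<^sup>2 \<and> (norm (phi *v x))\<^sup>2 \<le> (1 + d) * (norm x)\<^sup>2)"

lemma RIC_eq_Inf_restricted_isometry: "RIC phi s = Inf {d. restricted_isometry phi s d}"
  by (simp add: RIC_def restricted_isometry_def)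

lemma ex_restricted_isometry: "\<exists>d. restricted_isometry phi s d"
proof -
  obtain K where K: "\<And>x. norm (phi *v x) \<le> norm x * K"
    using bounded_linear.bounded[OF matrix_vector_mul_bounded_linear[of phi]] by blast
  have "(1 - (1 + K\<^sup>2)) * (norm x)\<^sup>2 \<le> (norm (phi *v x))\<^sup>2 \<and>
        (norm (phi *v x))\<^sup>2 \<le> (1 + (1 + K\<^sup>2)) * (norm x)\<^sup>2" for x
  proof
    have "(1 - (1 + K\<^sup>2)) * (norm x)\<^sup>2 \<le> 0"
      by (simp add: mult_nonpos_nonneg)
    then show "(1 - (1 + K\<^sup>2)) * (norm x)\<^sup>2 \<le> (norm (phi *v x))\<^sup>2"
      by (meson order_trans zero_le_power2)
    have "(norm (phi *v x))\<^sup>2 \<le> (norm x * K)\<^sup>2"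
      using K[of x] by (intro power_mono) auto
    also have "\<dots> = K\<^sup>2 * (norm x)\<^sup>2"
      by (simp add: power_mult_distrib)
    also have "\<dots> \<le> (1 + (1 + K\<^sup>2)) * (norm x)\<^sup>2"
      by (intro mult_right_mono) auto
    finally show "(norm (phi *v x))\<^sup>2 \<le> (1 + (1 + K\<^sup>2)) * (norm x)\<^sup>2" .
  qed
  then show ?thesis
    unfolding restricted_isometry_def by blast
qed

lemma restricted_isometry_if_RIC_less:
  assumes "RIC phi s < c"
  obtains d where "d < c" "restricted_isometry phi s d"
  using assms ex_restricted_isometry[of phi s] cInf_lessD[of "{d. restricted_isometry phi s d}" c]
  unfolding RIC_eq_Inf_restricted_isometry by blast

lemma restricted_isometry_nonneg:
  fixes phi :: "real^'n::finite^'p::finite"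
  assumes "restricted_isometry phi s d" "0 < s"
  shows "0 \<le> d"
proof -
  obtain i :: 'n where True by blast
  have "sparse s (axis i (1::real))"
    using assms(2) by (simp add: sparse_def l0_axis)
  then have "1 - d \<le> (norm (phi *v axis i 1))\<^sup>2 \<and> (norm (phi *v axis i 1))\<^sup>2 \<le> 1 + d"
    using assms(1) unfolding restricted_isometry_def by (metis norm_axis_1 mult_1_right one_power2)
  then show ?thesis by linarith
qed

lemma inner_le_if_restricted_isometry:
  assumes rip: "restricted_isometry phi s d"
    and disj: "supp u \<inter> supp v = {}" and sparse: "l0 u + l0 v \<le> s"
  shows "\<bar>inner (phi *v u) (phi *v v)\<bar> \<le> d * norm u * norm v"
proof -
  define a where "a = norm v"
  define b where "b = norm u"
  define X where "X = inner (phi *v u) (phi *v v)"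
  have "(norm (a *\<^sub>R u + c *\<^sub>R v))\<^sup>2 = a\<^sup>2 * (norm u)\<^sup>2 + c\<^sup>2 * (norm v)\<^sup>2" for c
    using inner_eq_0_if_supp_disjoint[OF disj] unfolding power2_norm_eq_inner
    by (simp add: inner_add_left inner_add_right inner_commute power2_eq_square)
  then have norm_comb: "(norm (a *\<^sub>R u + c *\<^sub>R v))\<^sup>2 = a\<^sup>2 * b\<^sup>2 + c\<^sup>2 * a\<^sup>2" for c
    by (simp add: a_def b_def)
  have norm_phi_comb: "(norm (phi *v (a *\<^sub>R u + c *\<^sub>R v)))\<^sup>2
      = a\<^sup>2 * (norm (phi *v u))\<^sup>2 + 2 * a * c * X + c\<^sup>2 * (norm (phi *v v))\<^sup>2" for c
    unfolding matrix_vector_right_distrib matrix_vector_mult_scaleR power2_norm_eq_inner X_def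
    by (simp add: inner_add_left inner_add_right inner_commute power2_eq_square algebra_simps)
  have "l0 (a *\<^sub>R u + c *\<^sub>R v) \<le> s" for c
    using l0_add_le[of "a *\<^sub>R u" "c *\<^sub>R v"] l0_scaleR_le[of a u] l0_scaleR_le[of c v] sparse
    by linarith
  then have "(1 - d) * (norm (a *\<^sub>R u + c *\<^sub>R v))\<^sup>2 \<le> (norm (phi *v (a *\<^sub>R u + c *\<^sub>R v)))\<^sup>2 \<and>
      (norm (phi *v (a *\<^sub>R u + c *\<^sub>R v)))\<^sup>2 \<le> (1 + d) * (norm (a *\<^sub>R u + c *\<^sub>R v))\<^sup>2" for c
    using rip unfolding restricted_isometry_def sparse_def by blast
  then have lower: "(1 - d) * (a\<^sup>2 * b\<^sup>2 + c\<^sup>2 * a\<^sup>2)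
        \<le> a\<^sup>2 * (norm (phi *v u))\<^sup>2 + 2 * a * c * X + c\<^sup>2 * (norm (phi *v v))\<^sup>2"
    and upper: "a\<^sup>2 * (norm (phi *v u))\<^sup>2 + 2 * a * c * X + c\<^sup>2 * (norm (phi *v v))\<^sup>2
        \<le> (1 + d) * (a\<^sup>2 * b\<^sup>2 + c\<^sup>2 * a\<^sup>2)" for c
    unfolding norm_comb norm_phi_comb by auto
  \<comment> \<open>Subtracting the bounds for \<open>c = b\<close> and \<open>c = -b\<close> isolates the cross term.\<close>
  have "4 * (a * b) * X \<le> 4 * (a * b) * (d * a * b)"
    using upper[of b] lower[of "-b"] by (simp add: algebra_simps power2_eq_square)
  moreover have "4 * (a * b) * (- X) \<le> 4 * (a * b) * (d * a * b)"
    using upper[of "-b"] lower[of b] by (simp add: algebra_simps power2_eq_square)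
  ultimately have "a * b = 0 \<or> \<bar>X\<bar> \<le> d * a * b"
    by (smt (verit) a_def b_def mult_le_cancel_left_pos norm_ge_zero zero_le_mult_iff)
  then show ?thesis
    by (auto simp: X_def a_def b_def mult_ac)
qed

lemma eq_0_if_rip_quadratic_le:
  fixes a b d :: real
  assumes "0 \<le> d" "d < sqrt 2 - 1" and le: "(1 - d) * (a\<^sup>2 + b\<^sup>2) \<le> d * (a\<^sup>2 + a * b)"
  shows "a = 0"
proof -
  have "a * b \<le> a\<^sup>2 / 4 + b\<^sup>2"
    using zero_le_power2[of "a / 2 - b"] by (simp add: power2_eq_square algebra_simps)
  then have "a\<^sup>2 + a * b \<le> 5 / 4 * a\<^sup>2 + b\<^sup>2"
    by simp
  also have "\<dots> \<le> sqrt 2 * a\<^sup>2 + sqrt 2 * b\<^sup>2"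
  proof (intro add_mono mult_right_mono)
    show "5 / 4 \<le> sqrt (2::real)"
      by (rule real_le_rsqrt) (simp add: power2_eq_square)
    show "b\<^sup>2 \<le> sqrt 2 * b\<^sup>2"
      using mult_right_mono[of 1 "sqrt 2" "b\<^sup>2"] by simp
  qed simp
  finally have "d * (a\<^sup>2 + a * b) \<le> d * (sqrt 2 * (a\<^sup>2 + b\<^sup>2))"
    using assms(1) by (intro mult_left_mono) (simp_all add: algebra_simps)
  with le have "(1 - d - d * sqrt 2) * (a\<^sup>2 + b\<^sup>2) \<le> 0"
    by (simp add: algebra_simps)
  moreover have "d * (1 + sqrt 2) < (sqrt 2 - 1) * (1 + sqrt 2)"
    using assms(2) by (intro mult_strict_right_mono) (auto intro: add_pos_nonneg)
  then have "0 < 1 - d - d * sqrt 2"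
    by (simp add: algebra_simps)
  ultimately have "a\<^sup>2 + b\<^sup>2 \<le> 0"
    by (simp add: mult_le_0_iff)
  then show ?thesis
    by (simp add: sum_power2_le_zero_iff)
qed

locale rip_of_order_2s =
  fixes phi :: "real^'n::finite^'p::finite" and s :: nat and d :: real
  assumes rip: "restricted_isometry phi (2 * s) d"
    and s_pos: "0 < s"
begin

lemma d_nonneg: "0 \<le> d"
  using restricted_isometry_nonneg[OF rip] s_pos by simp

lemma inner_le_block:
  assumes "l0 u \<le> s" "supp u \<inter> R = {}" "card R \<le> s" "card B = s"
    and "\<And>i j. i \<in> B \<Longrightarrow> j \<in> R \<Longrightarrow> \<bar>v$j\<bar> \<le> \<bar>v$i\<bar>"
  shows "\<bar>inner (phi *v u) (phi *v vec_restrict R v)\<bar> \<le> d * norm u * (\<Sum>i\<in>B. \<bar>v$i\<bar>) / sqrt s"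
proof -
  have "supp u \<inter> supp (vec_restrict R v) = {}" "l0 u + l0 (vec_restrict R v) \<le> 2 * s"
    using assms(1-3) supp_vec_restrict[of R v] l0_vec_restrict_le[of R v] by auto
  then have "\<bar>inner (phi *v u) (phi *v vec_restrict R v)\<bar> \<le> d * norm u * norm (vec_restrict R v)"
    by (intro inner_le_if_restricted_isometry[OF rip])
  also have "\<dots> \<le> d * norm u * ((\<Sum>i\<in>B. \<bar>v$i\<bar>) / sqrt s)"
    using assms(3-5) s_pos d_nonneg
    by (intro mult_left_mono norm_vec_restrict_le_dominating_block) auto
  finally show ?thesis
    by simp
qed

lemma inner_le_tail:
  assumes "l0 u \<le> s" "supp u \<inter> R = {}" "card B = s"
    and "\<And>i j. i \<in> B \<Longrightarrow> j \<in> R \<Longrightarrow> \<bar>v$j\<bar> \<le> \<bar>v$i\<bar>"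
  shows "\<bar>inner (phi *v u) (phi *v vec_restrict R v)\<bar>
    \<le> d * norm u * ((\<Sum>i\<in>B. \<bar>v$i\<bar>) + (\<Sum>i\<in>R. \<bar>v$i\<bar>)) / sqrt s"
  using assms(2-4)
  \<comment> \<open>\<open>B\<close> is the block preceding \<open>R\<close>; the induction peels off the next block.\<close>
proof (induction "card R" arbitrary: R B rule: less_induct)
  case less
  have nonneg: "0 \<le> d * norm u * (\<Sum>i\<in>R. \<bar>v$i\<bar>) / sqrt s"
    using d_nonneg by (simp add: sum_nonneg)
  show ?case
  proof (cases "card R \<le> s")
    case True
    then show ?thesis
      using inner_le_block[OF assms(1) less.prems(1) True less.prems(2,3)] nonneg
      by (simp add: add_divide_distrib distrib_left)
  next
    case False
    then obtain B' where B': "B' \<subseteq> R" "card B' = s"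
      "\<And>i j. i \<in> B' \<Longrightarrow> j \<in> R - B' \<Longrightarrow> \<bar>v$j\<bar> \<le> \<bar>v$i\<bar>"
      using obtain_top_subset_with_card[of R s "\<lambda>i. \<bar>v$i\<bar>"] by (metis finite nat_le_linear)
    have "card (R - B') < card R"
      using B'(1,2) False s_pos by (simp add: card_Diff_subset card_mono)
    then have tail: "\<bar>inner (phi *v u) (phi *v vec_restrict (R - B') v)\<bar>
        \<le> d * norm u * ((\<Sum>i\<in>B'. \<bar>v$i\<bar>) + (\<Sum>i\<in>R - B'. \<bar>v$i\<bar>)) / sqrt s"
      using less.prems(1) B'(2,3) by (intro less.hyps) auto
    have head: "\<bar>inner (phi *v u) (phi *v vec_restrict B' v)\<bar> \<le> d * norm u * (\<Sum>i\<in>B. \<bar>v$i\<bar>) / sqrt s"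
      using less.prems B' by (intro inner_le_block[OF assms(1)]) auto
    have "vec_restrict R v = vec_restrict B' v + vec_restrict (R - B') v"
      using B'(1) vec_restrict_Un[of B' "R - B'" v] by (simp add: Un_absorb1)
    then have "inner (phi *v u) (phi *v vec_restrict R v)
        = inner (phi *v u) (phi *v vec_restrict B' v) + inner (phi *v u) (phi *v vec_restrict (R - B') v)"
      by (simp add: matrix_vector_right_distrib inner_add_right)
    moreover have "(\<Sum>i\<in>R. \<bar>v$i\<bar>) = (\<Sum>i\<in>B'. \<bar>v$i\<bar>) + (\<Sum>i\<in>R - B'. \<bar>v$i\<bar>)"
      using B'(1) by (simp add: sum.subset_diff[of B' R])
    ultimately show ?thesis
      using head tail by (simp add: add_divide_distrib distrib_left)
  qed
qed

lemma inner_le_tail_of_cone: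
  assumes "card T \<le> s" and cone: "(\<Sum>i\<in>-T. \<bar>v$i\<bar>) \<le> (\<Sum>i\<in>T. \<bar>v$i\<bar>)"
  obtains T' where "T' \<subseteq> -T" "card T' \<le> s"
    "\<And>u. l0 u \<le> s \<Longrightarrow> supp u \<inter> (-T - T') = {} \<Longrightarrow>
      \<bar>inner (phi *v u) (phi *v vec_restrict (-T - T') v)\<bar> \<le> d * norm u * norm (vec_restrict T v)"
proof (cases "card (-T) \<le> s")
  case True
  then show ?thesis
    using d_nonneg by (intro that[of "-T"]) auto
next
  case False
  then obtain T' where T': "T' \<subseteq> -T" "card T' = s"
    "\<And>i j. i \<in> T' \<Longrightarrow> j \<in> -T - T' \<Longrightarrow> \<bar>v$j\<bar> \<le> \<bar>v$i\<bar>"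
    using obtain_top_subset_with_card[of "-T" s "\<lambda>i. \<bar>v$i\<bar>"] by (metis finite nat_le_linear)
  have "(\<Sum>i\<in>T'. \<bar>v$i\<bar>) + (\<Sum>i\<in>-T - T'. \<bar>v$i\<bar>) = (\<Sum>i\<in>-T. \<bar>v$i\<bar>)"
    using T'(1) by (simp add: sum.subset_diff[of T' "-T"])
  also have "\<dots> \<le> sqrt (card T) * norm (vec_restrict T v)"
    using cone sum_abs_le_sqrt_card_norm[of v T] by linarith
  also have "\<dots> \<le> sqrt s * norm (vec_restrict T v)"
    using assms(1) by (intro mult_right_mono) auto
  finally have tail_mass: "((\<Sum>i\<in>T'. \<bar>v$i\<bar>) + (\<Sum>i\<in>-T - T'. \<bar>v$i\<bar>)) / sqrt s \<le> norm (vec_restrict T v)"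
    using s_pos by (simp add: divide_le_eq mult.commute)
  have mass: "d * norm u * ((\<Sum>i\<in>T'. \<bar>v$i\<bar>) + (\<Sum>i\<in>-T - T'. \<bar>v$i\<bar>)) / sqrt s
      \<le> d * norm u * norm (vec_restrict T v)" for u :: "real^'n"
    using mult_left_mono[OF tail_mass, of "d * norm u"] d_nonneg by simp
  show ?thesis
  proof (rule that[of T'])
    show "T' \<subseteq> -T" "card T' \<le> s"
      using T'(1,2) by auto
    show "\<bar>inner (phi *v u) (phi *v vec_restrict (-T - T') v)\<bar> \<le> d * norm u * norm (vec_restrict T v)"
      if "l0 u \<le> s" "supp u \<inter> (-T - T') = {}" for u
      using inner_le_tail[OF that T'(2,3)] mass[of u] by linarith
  qed
qed

lemma null_space_property:
  assumes "d < sqrt 2 - 1" "phi *v v = 0" "card T \<le> s"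
    and cone: "(\<Sum>i\<in>-T. \<bar>v$i\<bar>) \<le> (\<Sum>i\<in>T. \<bar>v$i\<bar>)"
  shows "v = 0"
proof -
  obtain T' where T': "T' \<subseteq> -T" "card T' \<le> s"
    and tail: "\<And>u. l0 u \<le> s \<Longrightarrow> supp u \<inter> (-T - T') = {} \<Longrightarrow>
      \<bar>inner (phi *v u) (phi *v vec_restrict (-T - T') v)\<bar> \<le> d * norm u * norm (vec_restrict T v)"
    using inner_le_tail_of_cone[OF assms(3) cone] by blast
  define v\<^sub>0 v\<^sub>1 r where "v\<^sub>0 = vec_restrict T v" "v\<^sub>1 = vec_restrict T' v" "r = vec_restrict (-T - T') v"
  define a b where "a = norm v\<^sub>0" "b = norm v\<^sub>1"
  have sparse: "l0 v\<^sub>0 \<le> s" "l0 v\<^sub>1 \<le> s"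
    using l0_vec_restrict_le assms(3) T'(2) unfolding v\<^sub>0_v\<^sub>1_r_def by (metis order_trans)+
  have disj: "supp v\<^sub>0 \<inter> supp v\<^sub>1 = {}" "supp v\<^sub>0 \<inter> (-T - T') = {}" "supp v\<^sub>1 \<inter> (-T - T') = {}"
    using T'(1) supp_vec_restrict unfolding v\<^sub>0_v\<^sub>1_r_def by blast+
  have "v = v\<^sub>0 + v\<^sub>1 + r"
    using T'(1) unfolding v\<^sub>0_v\<^sub>1_r_def by (auto simp: vec_eq_iff)
  then have "phi *v (v\<^sub>0 + v\<^sub>1) + phi *v r = 0"
    using assms(2) by (simp add: matrix_vector_right_distrib)
  then have phi_head: "phi *v (v\<^sub>0 + v\<^sub>1) = - (phi *v r)"
    by (simp add: eq_neg_iff_add_eq_0)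
  have "(norm (phi *v (v\<^sub>0 + v\<^sub>1)))\<^sup>2 = - inner (phi *v v\<^sub>0) (phi *v r) - inner (phi *v v\<^sub>1) (phi *v r)"
    unfolding power2_norm_eq_inner
    by (subst (2) phi_head) (simp add: matrix_vector_right_distrib inner_add_left)
  also have "\<dots> \<le> d * a * a + d * b * a"
    using tail[OF sparse(1) disj(2)] tail[OF sparse(2) disj(3)]
    unfolding v\<^sub>0_v\<^sub>1_r_def a_b_def by linarith
  finally have upper: "(norm (phi *v (v\<^sub>0 + v\<^sub>1)))\<^sup>2 \<le> d * (a\<^sup>2 + a * b)"
    by (simp add: algebra_simps power2_eq_square)
  have "l0 (v\<^sub>0 + v\<^sub>1) \<le> 2 * s"
    using l0_add_le[of v\<^sub>0 v\<^sub>1] sparse by linarith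
  moreover have "(norm (v\<^sub>0 + v\<^sub>1))\<^sup>2 = a\<^sup>2 + b\<^sup>2"
    using inner_eq_0_if_supp_disjoint[OF disj(1)] unfolding a_b_def power2_norm_eq_inner
    by (simp add: inner_add_left inner_add_right inner_commute)
  ultimately have lower: "(1 - d) * (a\<^sup>2 + b\<^sup>2) \<le> (norm (phi *v (v\<^sub>0 + v\<^sub>1)))\<^sup>2"
    using rip unfolding restricted_isometry_def sparse_def by metis
  have "a = 0"
    using eq_0_if_rip_quadratic_le[OF d_nonneg assms(1) order_trans[OF lower upper]] .
  then have "(\<Sum>i\<in>T. \<bar>v$i\<bar>) \<le> 0"
    using sum_abs_le_sqrt_card_norm[of v T] unfolding a_b_def v\<^sub>0_v\<^sub>1_r_def by simp
  then have "l1_norm v \<le> 0"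
    using cone l1_norm_split[of v T] by linarith
  moreover have "0 \<le> l1_norm v"
    unfolding l1_norm_def by (simp add: sum_nonneg)
  ultimately show ?thesis
    using l1_norm_eq_0_iff[of v] by linarith
qed

theorem l1_min_solution_iff:
  assumes "d < sqrt 2 - 1" "l0 x \<le> s"
  shows "l1_min_solution phi (phi *v x) z \<longleftrightarrow> z = x"
proof -
  have strict: "l1_norm x < l1_norm w" if "phi *v w = phi *v x" "w \<noteq> x" for w
  proof -
    define T where "T = supp x"
    have "(\<Sum>i\<in>T. \<bar>(w - x)$i\<bar>) < (\<Sum>i\<in>-T. \<bar>(w - x)$i\<bar>)"
      using null_space_property[OF assms(1), of "w - x" T] that assms(2)
      by (force simp: T_def l0_def matrix_vector_mult_diff_distrib)
    then have "l1_norm x < (\<Sum>i\<in>T. \<bar>x$i\<bar> - \<bar>(w - x)$i\<bar>) + (\<Sum>i\<in>-T. \<bar>(w - x)$i\<bar>)"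
      using l1_norm_split[of x T] by (simp add: sum_subtractf T_def supp_def)
    also have "\<dots> \<le> (\<Sum>i\<in>T. \<bar>w$i\<bar>) + (\<Sum>i\<in>-T. \<bar>w$i\<bar>)"
      by (intro add_mono sum_mono) (auto simp: T_def supp_def abs_triangle_ineq2_sym)
    finally show ?thesis
      by (simp add: l1_norm_split[of w T])
  qed
  then show ?thesis
    unfolding l1_min_solution_def by (metis order_less_le not_less)
qed

end

lemma trajectory_pinching_1_nth:
  assumes "\<And>i. f i 0 = 0" "\<And>i j. h i j 0 0 = 0" "i \<noteq> q"
  shows "trajectory A f h (pinching e q) 1 $ i = (if A i q then h i q 0 e else 0)"
proof -
  have "trajectory A f h (pinching e q) 1 $ i = (\<Sum>j\<in>{j. A i j}. h i j 0 (pinching e q $ j))"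
    using assms(1,3) by (simp add: trajectory_def net_step_def pinching_def)
  also have "\<dots> = (\<Sum>j\<in>{j. A i j}. if j = q then h i q 0 e else 0)"
    using assms(2) by (intro sum.cong) (auto simp: pinching_def)
  finally show ?thesis
    by (simp add: sum.delta)
qed

lemma supp_trajectory_pinching_1:
  assumes "\<not> A q q" "\<And>i. f i 0 = 0" "\<And>i j. h i j 0 0 = 0"
    and "\<And>i j v. 0 < \<bar>v\<bar> \<Longrightarrow> \<bar>v\<bar> < \<delta> \<Longrightarrow> h i j 0 v \<noteq> 0" "0 < \<bar>e\<bar>" "\<bar>e\<bar> < \<delta>"
  shows "supp (trajectory A f h (pinching e q) 1) - {q} = first_level A q"
proof -
  have "i \<in> supp (trajectory A f h (pinching e q) 1) \<longleftrightarrow> A i q" if "i \<noteq> q" for i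
    using trajectory_pinching_1_nth[of f h i q A e, OF assms(2,3) that] assms(4-6) by (simp add: supp_def)
  with assms(1) show ?thesis
    by (force simp: first_level_def)
qed

lemma l0_le_max_out_degree:
  fixes A :: "'n::finite \<Rightarrow> 'n \<Rightarrow> bool"
  assumes "supp x - {q} = first_level A q"
  shows "l0 x \<le> max_out_degree A + 1"
proof -
  have "l0 x \<le> card (insert q (first_level A q))"
    unfolding l0_def using assms by (intro card_mono) auto
  also have "\<dots> \<le> out_degree A q + 1"
    by (simp add: card_insert_le_m1 out_degree_def first_level_def card_insert_if)
  also have "out_degree A q \<le> max_out_degree A"
    unfolding max_out_degree_def by (intro Max_ge) auto
  finally show ?thesis
    by simp
qed

theorem mainTheorem4:
  fixes A :: "'n::finite \<Rightarrow> 'n \<Rightarrow> bool"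
    and f :: "'n \<Rightarrow> real \<Rightarrow> real"
    and h :: "'n \<Rightarrow> 'n \<Rightarrow> real \<Rightarrow> real \<Rightarrow> real"
    and \<delta> :: real
    and eps :: "'n \<Rightarrow> real"
    and phi :: "'n \<Rightarrow> real^'n^'p::finite"
  assumes no_loops: "\<And>i. \<not> A i i"
    and assm1: "\<And>i. f i 0 = 0"
    and delta_pos: "\<delta> > 0"
    and assm2a: "\<And>i j. h i j 0 0 = 0"
    and assm2b: "\<And>i j v. 0 < \<bar>v\<bar> \<Longrightarrow> \<bar>v\<bar> < \<delta> \<Longrightarrow> h i j 0 v \<noteq> 0"
    and eps: "\<And>q. 0 < \<bar>eps q\<bar> \<and> \<bar>eps q\<bar> < \<delta>"
    and P_lt_N: "CARD('p) < CARD('n)"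
    and rip: "\<And>q. RIC (phi q) (2 * (max_out_degree A + 1)) < sqrt 2 - 1"
  shows "(\<forall>q. (\<exists>!z. l1_min_solution (phi q) (phi q *v trajectory A f h (pinching (eps q) q) 1) z)
              \<and> l1_min_solution (phi q) (phi q *v trajectory A f h (pinching (eps q) q) 1)
                  (trajectory A f h (pinching (eps q) q) 1))
       \<and> (\<forall>q. supp (trajectory A f h (pinching (eps q) q) 1) - {q} = first_level A q)
       \<and> (\<forall>i j. A i j \<longleftrightarrow> i \<noteq> j \<and>
              i \<in> supp (THE z. l1_min_solution (phi j) (phi j *v trajectory A f h (pinching (eps j) j) 1) z))"
proof -
  define x where "x q = trajectory A f h (pinching (eps q) q) 1" for q
  have supp_x: "supp (x q) - {q} = first_level A q" for q
    unfolding x_def using no_loops assm1 assm2a assm2b eps[of q]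
    by (intro supp_trajectory_pinching_1) auto
  have recovery: "l1_min_solution (phi q) (phi q *v x q) z \<longleftrightarrow> z = x q" for q z
  proof -
    obtain d where "d < sqrt 2 - 1" "restricted_isometry (phi q) (2 * (max_out_degree A + 1)) d"
      using restricted_isometry_if_RIC_less[OF rip] .
    then interpret rip_of_order_2s "phi q" "max_out_degree A + 1" d
      by unfold_locales simp_all
    show ?thesis
      using l1_min_solution_iff \<open>d < sqrt 2 - 1\<close> l0_le_max_out_degree[OF supp_x] by blast
  qed
  then have "(THE z. l1_min_solution (phi q) (phi q *v x q) z) = x q" for q
    by simp
  then show ?thesis
    unfolding x_def[symmetric] using recovery supp_x no_loops by (auto simp: first_level_def)
qed

end
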